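(* For every $k\ge1$ and $l\in\{1,\dots,k+1\}$, the maps $\widetilde{i(\alpha)}:\mathrm{gr}_{k,l}\to\mathrm{gr}_{k-1,l-1}$, $[u]\mapsto[i(\alpha)u]$, and $\widetilde X:\mathrm{gr}_{k-1,l-1}\to\mathrm{gr}_{k,l}$, $[u]\mapsto[Xu]$, are well defined and satisfy \[\widetilde X\circ\widetilde{i(\alpha)}\big|_{\mathrm{gr}_{k,l}}=r(l-1,k-l+1)\,\mathrm{Id},\qquad \widetilde{i(\alpha)}\circ\widetilde X\big|_{\mathrm{gr}_{k-1,l-1}}=r(l-1,k-l+1)\,\mathrm{Id}.\] In particular, if $r(l-1,k-l+1)\neq0$, then $\widetilde{i(\alpha)}:\mathrm{gr}_{k,l}\to\mathrm{gr}_{k-1,l-1}$ is invertible with inverse $\frac{1}{r(l-1,k-l+1)}\widetilde X$.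
   Context: Let $n\ge1$, $M=\mathbb{R}^{2n+1}$ with coordinates $(q^1,\dots,q^n,p^1,\dots,p^n,t)$. For $\mu\in\mathbb{R}$, $\mathcal{S}^k_\mu$ denotes the space of smooth functions $S(x,\xi)$ on $M\times\mathbb{R}^{2n+1}$ homogeneous polynomial of degree $k$ in $\xi=(\xi_{q^1},\dots,\xi_{q^n},\xi_{p^1},\dots,\xi_{p^n},\xi_t)$. Fix $\delta\in\mathbb{R}$ and set $R^k=\mathcal{S}^k_{\delta+\frac{k}{n+1}}$ for $k\ge0$, $R^{j}=0$ for $j<0$. Let $E_s=\sum_i(p^i\partial_{p^i}+q^i\partial_{q^i})$, $\langle E_s,\xi\rangle=\sum_i(p^i\xi_{p^i}+q^i\xi_{q^i})$, $D(S)=\sum_i(\xi_{q^i}\partial_{p^i}S-\xi_{p^i}\partial_{q^i}S)+\xi_tE_s(S)-\langle E_s,\xi\rangle\partial_tS$. Operators: $i(\alpha):R^k\to R^{k-1}$, $i(\alpha)(S)=\frac12\big(\sum_i(p^i\partial_{\xi_{q^i}}S-q^i\partial_{\xi_{p^i}}S)-\partial_{\xi_t}S\big)$; $X:R^k\to R^{k+1}$, $X(S)=D(S)+(2(n+1)\delta+k)\xi_tS$. Set $r(l,k)=-\frac{l}{2}\big(2(n+1)\delta+2k+l-1\big)$. For $k\ge0,l\ge0$, $\mathcal{F}_{k,l}=R^k\cap\ker\big(i(\alpha)^l\big)$; for $l\ge1$, $\mathrm{gr}_{k,l}=\mathcal{F}_{k,l}/\mathcal{F}_{k,l-1}$, and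 $\mathrm{gr}_{k,0}=\{0\}$. *)

theory Defs
  imports "HOL-Analysis.Analysis"
begin

text \<open>Points of M = R^(2n+1) (and covectors xi) are triples (q, p, t) with
  q, p :: real^'n and t :: real; n = CARD('n) \<ge> 1.\<close>
type_synonym 'n pt = "(real^'n) \<times> (real^'n) \<times> real"

fun iter_deriv :: "'a::real_normed_vector list \<Rightarrow> ('a \<Rightarrow> real) \<Rightarrow> 'a \<Rightarrow> real" where
  "iter_deriv [] f = f"
| "iter_deriv (v # vs) f = (\<lambda>x. frechet_derivative (iter_deriv vs f) (at x) v)"

definition smooth_fun :: "('a::real_normed_vector \<Rightarrow> real) \<Rightarrow> bool" where
  "smooth_fun f \<longleftrightarrow> (\<forall>vs x. iter_deriv vs f differentiable (at x))"

definition hom_poly :: "nat \<Rightarrow> ('a::euclidean_space \<Rightarrow> 'a \<Rightarrow> real) \<Rightarrow> bool" where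
  "hom_poly k S \<longleftrightarrow> (\<exists>E c. finite E \<and>
      (\<forall>e\<in>E. sum e Basis = k \<and> smooth_fun (c e)) \<and>
      (\<forall>x \<xi>. S x \<xi> = (\<Sum>e\<in>E. c e x * (\<Prod>b\<in>Basis. (\<xi> \<bullet> b) ^ e b))))"

text \<open>R^k (as a space of functions; the weight only affects the action, not the space).\<close>
definition Rsp :: "nat \<Rightarrow> ('n::finite pt \<Rightarrow> 'n pt \<Rightarrow> real) set" where
  "Rsp k = {S. hom_poly k S}"

definition dq :: "'n::finite \<Rightarrow> 'n pt" where "dq i = (axis i 1, 0, 0)"
definition dp :: "'n::finite \<Rightarrow> 'n pt" where "dp i = (0, axis i 1, 0)"
definition dt :: "'n::finite pt" where "dt = (0, 0, 1)"

definition qc :: "'n::finite pt \<Rightarrow> 'n \<Rightarrow> real" where "qc x i = fst x $ i"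
definition pc :: "'n::finite pt \<Rightarrow> 'n \<Rightarrow> real" where "pc x i = fst (snd x) $ i"
definition tc :: "'n::finite pt \<Rightarrow> real" where "tc x = snd (snd x)"

definition pdx :: "'n::finite pt \<Rightarrow> ('n pt \<Rightarrow> 'n pt \<Rightarrow> real) \<Rightarrow> 'n pt \<Rightarrow> 'n pt \<Rightarrow> real" where
  "pdx v S = (\<lambda>x \<xi>. frechet_derivative (\<lambda>y. S y \<xi>) (at x) v)"
definition pdxi :: "'n::finite pt \<Rightarrow> ('n pt \<Rightarrow> 'n pt \<Rightarrow> real) \<Rightarrow> 'n pt \<Rightarrow> 'n pt \<Rightarrow> real" where
  "pdxi v S = (\<lambda>x \<xi>. frechet_derivative (\<lambda>\<eta>. S x \<eta>) (at \<xi>) v)"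

definition Es :: "('n::finite pt \<Rightarrow> 'n pt \<Rightarrow> real) \<Rightarrow> 'n pt \<Rightarrow> 'n pt \<Rightarrow> real" where
  "Es S = (\<lambda>x \<xi>. \<Sum>i\<in>UNIV. pc x i * pdx (dp i) S x \<xi> + qc x i * pdx (dq i) S x \<xi>)"

definition Es_xi :: "'n::finite pt \<Rightarrow> 'n pt \<Rightarrow> real" where
  "Es_xi x \<xi> = (\<Sum>i\<in>UNIV. pc x i * pc \<xi> i + qc x i * qc \<xi> i)"

definition Dop :: "('n::finite pt \<Rightarrow> 'n pt \<Rightarrow> real) \<Rightarrow> 'n pt \<Rightarrow> 'n pt \<Rightarrow> real" where
  "Dop S = (\<lambda>x \<xi>. (\<Sum>i\<in>UNIV. qc \<xi> i * pdx (dp i) S x \<xi> - pc \<xi> i * pdx (dq i) S x \<xi>)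
                  + tc \<xi> * Es S x \<xi> - Es_xi x \<xi> * pdx dt S x \<xi>)"

definition ialpha :: "('n::finite pt \<Rightarrow> 'n pt \<Rightarrow> real) \<Rightarrow> 'n pt \<Rightarrow> 'n pt \<Rightarrow> real" where
  "ialpha S = (\<lambda>x \<xi>. (1/2) * ((\<Sum>i\<in>UNIV. pc x i * pdxi (dq i) S x \<xi> - qc x i * pdxi (dp i) S x \<xi>)
                                - pdxi dt S x \<xi>))"

text \<open>The operator X on R^k (k = degree of the argument).\<close>
definition Xop :: "real \<Rightarrow> nat \<Rightarrow> ('n::finite pt \<Rightarrow> 'n pt \<Rightarrow> real) \<Rightarrow> 'n pt \<Rightarrow> 'n pt \<Rightarrow> real" where
  "Xop \<delta> k S = (\<lambda>x \<xi>. Dop S x \<xi> + (2 * (real CARD('n) + 1) * \<delta> + real k) * tc \<xi> * S x \<xi>)"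

definition rr :: "nat \<Rightarrow> real \<Rightarrow> nat \<Rightarrow> nat \<Rightarrow> real" where
  "rr n \<delta> l k = - (real l / 2) * (2 * (real n + 1) * \<delta> + 2 * real k + real l - 1)"

definition Fsp :: "nat \<Rightarrow> nat \<Rightarrow> ('n::finite pt \<Rightarrow> 'n pt \<Rightarrow> real) set" where
  "Fsp k l = {S \<in> Rsp k. (ialpha ^^ l) S = (\<lambda>x \<xi>. 0)}"

text \<open>gr_{k,l} = F_{k,l}/F_{k,l-1}. For l = 0 (natural subtraction) this is F_{k,0}/F_{k,0},
  the one-point quotient, matching the convention gr_{k,0} = {0}.\<close>
definition grrel :: "nat \<Rightarrow> nat \<Rightarrow> (('n::finite pt \<Rightarrow> 'n pt \<Rightarrow> real) \<times> ('n pt \<Rightarrow> 'n pt \<Rightarrow> real)) set" where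
  "grrel k l = {(u, v). u \<in> Fsp k l \<and> v \<in> Fsp k l \<and> (\<lambda>x \<xi>. u x \<xi> - v x \<xi>) \<in> Fsp k (l - 1)}"

definition gr :: "nat \<Rightarrow> nat \<Rightarrow> ('n::finite pt \<Rightarrow> 'n pt \<Rightarrow> real) set set" where
  "gr k l = Fsp k l // grrel k l"

definition cls :: "nat \<Rightarrow> nat \<Rightarrow> ('n::finite pt \<Rightarrow> 'n pt \<Rightarrow> real) \<Rightarrow> ('n pt \<Rightarrow> 'n pt \<Rightarrow> real) set" where
  "cls k l u = grrel k l `` {u}"

definition rep :: "'a set \<Rightarrow> 'a" where "rep C = (SOME u. u \<in> C)"

definition scls :: "nat \<Rightarrow> nat \<Rightarrow> real \<Rightarrow> ('n::finite pt \<Rightarrow> 'n pt \<Rightarrow> real) set \<Rightarrow> ('n pt \<Rightarrow> 'n pt \<Rightarrow> real) set" where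
  "scls k l c C = cls k l (\<lambda>x \<xi>. c * rep C x \<xi>)"

definition ialpha_t :: "nat \<Rightarrow> nat \<Rightarrow> ('n::finite pt \<Rightarrow> 'n pt \<Rightarrow> real) set \<Rightarrow> ('n pt \<Rightarrow> 'n pt \<Rightarrow> real) set" where
  "ialpha_t k l C = cls (k - 1) (l - 1) (ialpha (rep C))"

definition X_t :: "real \<Rightarrow> nat \<Rightarrow> nat \<Rightarrow> ('n::finite pt \<Rightarrow> 'n pt \<Rightarrow> real) set \<Rightarrow> ('n pt \<Rightarrow> 'n pt \<Rightarrow> real) set" where
  "X_t \<delta> k l D = cls k l (Xop \<delta> (k - 1) (rep D))"

end

(*
  The operators are of first order: i(alpha) S is half the xi-derivative of S in the direction
  W(x) = (p, -q, -1), and D S (x, xi) is the x-derivative of S in a direction V(x, xi) that is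
  linear in xi and satisfies V(x, W(x)) = 0. Together with Euler's identity and the symmetry of
  mixed partial derivatives this gives the commutator relation

    i(alpha) X_j = X_(j-1) i(alpha) + mu_j,    mu_j = -((n+1) delta + j),

  on symbols of degree j, and by iteration
  i(alpha)^m X_d = X_(d-m) i(alpha)^m + sigma_m i(alpha)^(m-1),  sigma_m = mu_d + ... + mu_(d-m+1).
  For d = k - 1 and m = l - 1 one has sigma_m = r(l-1, k-l+1), so X i(alpha) agrees with
  multiplication by r on F_{k,l} modulo F_{k,l-1}, and i(alpha) X agrees with it on F_{k-1,l-1}
  modulo F_{k-1,l-2}. Linear maps between pairs of subspaces that are inverse to each other up to
  a scalar modulo the smaller subspaces induce maps of the quotients that are inverse up to that
  scalar.
*)
theory Submission
  imports Defs "HOL-Library.Function_Algebras"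
begin

section \<open>Induced maps on quotients of subspaces\<close>

instantiation "fun" :: (type, real_vector) real_vector
begin

definition scaleR_fun :: "real \<Rightarrow> ('a \<Rightarrow> 'b) \<Rightarrow> 'a \<Rightarrow> 'b" where
  "scaleR_fun c f = (\<lambda>x. c *\<^sub>R f x)"

instance
  by standard (simp_all add: scaleR_fun_def fun_eq_iff scaleR_add_right scaleR_add_left)

end

lemma scaleR_fun_apply [simp]: "(c *\<^sub>R f) x = c *\<^sub>R f x"
  by (simp add: scaleR_fun_def)

definition linear_on :: "'a::real_vector set \<Rightarrow> ('a \<Rightarrow> 'b::real_vector) \<Rightarrow> bool" where
  "linear_on A f \<longleftrightarrow>
    (\<forall>u\<in>A. \<forall>v\<in>A. \<forall>a b. f (a *\<^sub>R u + b *\<^sub>R v) = a *\<^sub>R f u + b *\<^sub>R f v)"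

lemma linear_onD:
  "linear_on A f \<Longrightarrow> u \<in> A \<Longrightarrow> v \<in> A \<Longrightarrow>
    f (a *\<^sub>R u + b *\<^sub>R v) = a *\<^sub>R f u + b *\<^sub>R f v"
  by (simp add: linear_on_def)

lemma linear_on_diff: "linear_on A f \<Longrightarrow> u \<in> A \<Longrightarrow> v \<in> A \<Longrightarrow> f (u - v) = f u - f v"
  unfolding linear_on_def by (metis scaleR_one scaleR_minus1_left diff_conv_add_uminus)

lemma linear_on_scaleR: "linear_on A f \<Longrightarrow> u \<in> A \<Longrightarrow> f (c *\<^sub>R u) = c *\<^sub>R f u"
  unfolding linear_on_def by (metis add.right_neutral scaleR_zero_left)

lemma linear_on_subset: "linear_on B f \<Longrightarrow> A \<subseteq> B \<Longrightarrow> linear_on A f"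
  unfolding linear_on_def by blast

lemma linear_on_add: "linear_on A f \<Longrightarrow> u \<in> A \<Longrightarrow> v \<in> A \<Longrightarrow> f (u + v) = f u + f v"
  unfolding linear_on_def by (metis scaleR_one)

lemma subspace_kernel_on:
  assumes "subspace A" "linear_on A f"
  shows "subspace {u \<in> A. f u = 0}"
proof -
  have "f 0 = 0"
    using linear_on_scaleR[OF assms(2) subspace_0[OF assms(1)], of 0] by simp
  then show ?thesis
    using assms by (auto simp: subspace_def linear_on_add linear_on_scaleR)
qed

definition quot_rel :: "'a::ab_group_add set \<Rightarrow> 'a set \<Rightarrow> ('a \<times> 'a) set" where
  "quot_rel Q P = {(u, v). u \<in> Q \<and> v \<in> Q \<and> u - v \<in> P}"

definition induced :: "('a \<Rightarrow> 'b) \<Rightarrow> ('b \<times> 'b) set \<Rightarrow> 'a set \<Rightarrow> 'b set" where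
  "induced f R C = R `` {f (rep C)}"

lemma equiv_quot_rel:
  assumes "subspace P"
  shows "equiv Q (quot_rel Q P)"
proof (rule equivI)
  show "refl_on Q (quot_rel Q P)"
    using subspace_0[OF assms] by (auto simp: refl_on_def quot_rel_def)
  show "sym (quot_rel Q P)"
  proof (rule symI)
    fix u v assume "(u, v) \<in> quot_rel Q P"
    moreover from this have "- (u - v) \<in> P"
      using subspace_neg[OF assms] unfolding quot_rel_def by blast
    ultimately show "(v, u) \<in> quot_rel Q P"
      unfolding quot_rel_def by auto
  qed
  show "trans (quot_rel Q P)"
  proof (rule transI)
    fix u v w assume "(u, v) \<in> quot_rel Q P" "(v, w) \<in> quot_rel Q P"
    moreover from this have "(u - v) + (v - w) \<in> P"
      using subspace_add[OF assms] unfolding quot_rel_def by blast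
    ultimately show "(u, w) \<in> quot_rel Q P"
      unfolding quot_rel_def by auto
  qed
qed (auto simp: quot_rel_def)

lemma quot_rel_class_eq_iff:
  assumes "subspace P" "u \<in> Q" "v \<in> Q"
  shows "quot_rel Q P `` {u} = quot_rel Q P `` {v} \<longleftrightarrow> u - v \<in> P"
proof -
  have "quot_rel Q P `` {u} = quot_rel Q P `` {v} \<longleftrightarrow> (u, v) \<in> quot_rel Q P"
    by (rule eq_equiv_class_iff[OF equiv_quot_rel[OF assms(1)] assms(2,3)])
  also have "\<dots> \<longleftrightarrow> u - v \<in> P"
    using assms(2,3) by (simp add: quot_rel_def)
  finally show ?thesis .
qed

lemma class_eq_of_mem:
  assumes "subspace P" "C \<in> Q // quot_rel Q P" "u \<in> C"
  shows "C = quot_rel Q P `` {u}"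
proof -
  obtain a where "C = quot_rel Q P `` {a}"
    using assms(2) by (auto elim: quotientE)
  with assms(3) show ?thesis
    using equiv_class_eq[OF equiv_quot_rel[OF assms(1)]] by blast
qed

lemma rep_mem:
  assumes "subspace P" "C \<in> Q // quot_rel Q P"
  shows "rep C \<in> C"
  using in_quotient_imp_non_empty[OF equiv_quot_rel[OF assms(1)] assms(2)]
  unfolding rep_def by (simp add: some_in_eq)

lemma rep_mem_carrier:
  assumes "subspace P" "C \<in> Q // quot_rel Q P"
  shows "rep C \<in> Q"
  using rep_mem[OF assms] in_quotient_imp_subset[OF equiv_quot_rel[OF assms(1)] assms(2)] by blast

lemma induced_cong:
  assumes "subspace P" "subspace P'" "C \<in> Q // quot_rel Q P"
    and "\<And>u. u \<in> Q \<Longrightarrow> f u \<in> Q' \<and> h u \<in> Q' \<and> f u - h u \<in> P'"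
  shows "induced f (quot_rel Q' P') C = induced h (quot_rel Q' P') C"
  unfolding induced_def using rep_mem_carrier[OF assms(1,3)] assms(4)
  by (simp add: quot_rel_class_eq_iff[OF assms(2)])

lemma induced_scaleR_1:
  assumes "subspace P" "C \<in> Q // quot_rel Q P"
  shows "induced (scaleR 1) (quot_rel Q P) C = C"
  unfolding induced_def using class_eq_of_mem[OF assms rep_mem[OF assms]] by simp

locale filtered_map =
  fixes Q P :: "'a::real_vector set" and Q' P' :: "'b::real_vector set" and f :: "'a \<Rightarrow> 'b"
  assumes subspace_Q: "subspace Q" and subspace_P: "subspace P"
    and subspace_Q': "subspace Q'" and subspace_P': "subspace P'"
    and linear_on_f: "linear_on Q f" and f_Q: "f ` Q \<subseteq> Q'" and f_P: "f ` P \<subseteq> P'"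
begin

lemma respects:
  assumes "(u, v) \<in> quot_rel Q P"
  shows "(f u, f v) \<in> quot_rel Q' P'"
proof -
  have "u \<in> Q" "v \<in> Q" "u - v \<in> P"
    using assms by (auto simp: quot_rel_def)
  then show ?thesis
    using f_Q f_P linear_on_diff[OF linear_on_f] unfolding quot_rel_def by auto
qed

lemma induced_eq:
  assumes "C \<in> Q // quot_rel Q P" "u \<in> C"
  shows "induced f (quot_rel Q' P') C = quot_rel Q' P' `` {f u}"
proof -
  have "(rep C, u) \<in> quot_rel Q P"
    using assms rep_mem[OF subspace_P assms(1)] class_eq_of_mem[OF subspace_P assms(1)] by blast
  then show ?thesis
    unfolding induced_def using equiv_class_eq[OF equiv_quot_rel[OF subspace_P'] respects] by blast
qed

lemma induced_in_quotient:
  assumes "C \<in> Q // quot_rel Q P"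
  shows "induced f (quot_rel Q' P') C \<in> Q' // quot_rel Q' P'"
  unfolding induced_def using rep_mem_carrier[OF subspace_P assms] f_Q by (auto intro: quotientI)

lemma image_subset_induced:
  assumes "C \<in> Q // quot_rel Q P"
  shows "f ` C \<subseteq> induced f (quot_rel Q' P') C"
proof
  fix y assume "y \<in> f ` C"
  then obtain u where "u \<in> C" "y = f u" by blast
  moreover have "u \<in> Q"
    using \<open>u \<in> C\<close> in_quotient_imp_subset[OF equiv_quot_rel[OF subspace_P] assms] by blast
  ultimately show "y \<in> induced f (quot_rel Q' P') C"
    unfolding induced_eq[OF assms \<open>u \<in> C\<close>] using f_Q subspace_0[OF subspace_P']
    by (auto simp: quot_rel_def)
qed

end

lemma filtered_map_scaleR:
  "subspace Q \<Longrightarrow> subspace P \<Longrightarrow> filtered_map Q P Q P (scaleR c)"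
  unfolding filtered_map_def linear_on_def
  by (auto simp: subspace_scale scaleR_add_right mult.commute)

lemma induced_comp:
  assumes "filtered_map Q P Q' P' f" "filtered_map Q' P' Q'' P'' g" "C \<in> Q // quot_rel Q P"
  shows "induced g (quot_rel Q'' P'') (induced f (quot_rel Q' P') C) =
    induced (g \<circ> f) (quot_rel Q'' P'') C"
proof -
  interpret f: filtered_map Q P Q' P' f by fact
  interpret g: filtered_map Q' P' Q'' P'' g by fact
  have u: "rep C \<in> C" by (rule rep_mem[OF f.subspace_P assms(3)])
  have "f (rep C) \<in> induced f (quot_rel Q' P') C"
    using f.image_subset_induced[OF assms(3)] u by blast
  then have "induced g (quot_rel Q'' P'') (induced f (quot_rel Q' P') C) =
      quot_rel Q'' P'' `` {g (f (rep C))}"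
    by (rule g.induced_eq[OF f.induced_in_quotient[OF assms(3)]])
  then show ?thesis by (simp add: induced_def)
qed

lemma (in filtered_map) induced_scaleR_commute:
  assumes "C \<in> Q // quot_rel Q P"
  shows "induced f (quot_rel Q' P') (induced (scaleR c) (quot_rel Q P) C) =
    induced (scaleR c) (quot_rel Q' P') (induced f (quot_rel Q' P') C)"
proof -
  have "induced f (quot_rel Q' P') (induced (scaleR c) (quot_rel Q P) C) =
      induced (f \<circ> scaleR c) (quot_rel Q' P') C"
    by (rule induced_comp[OF filtered_map_scaleR[OF subspace_Q subspace_P] filtered_map_axioms assms])
  also have "\<dots> = induced (scaleR c \<circ> f) (quot_rel Q' P') C"
    using linear_on_scaleR[OF linear_on_f] f_Q subspace_scale[OF subspace_Q]
      subspace_scale[OF subspace_Q'] subspace_0[OF subspace_P']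
    by (intro induced_cong[OF subspace_P subspace_P' assms]) auto
  also have "\<dots> = induced (scaleR c) (quot_rel Q' P') (induced f (quot_rel Q' P') C)"
    by (rule induced_comp[OF filtered_map_axioms filtered_map_scaleR[OF subspace_Q' subspace_P'] assms,
          symmetric])
  finally show ?thesis .
qed

lemma induced_scaleR_scaleR:
  fixes Q :: "'a::real_vector set"
  assumes "subspace Q" "subspace P" "C \<in> Q // quot_rel Q P"
  shows "induced (scaleR a) (quot_rel Q P) (induced (scaleR b) (quot_rel Q P) C) =
    induced (scaleR (a * b)) (quot_rel Q P) C"
proof -
  have "scaleR a \<circ> scaleR b = (scaleR (a * b) :: 'a \<Rightarrow> 'a)"
    by (simp add: fun_eq_iff)
  then show ?thesis
    using induced_comp[OF filtered_map_scaleR[OF assms(1,2)] filtered_map_scaleR[OF assms(1,2)]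
        assms(3)]
    by simp
qed

locale quasi_inverse =
  f: filtered_map Q P Q' P' f + g: filtered_map Q' P' Q P g
  for Q :: "'a::real_vector set" and P and Q' :: "'b::real_vector set" and P' and f g +
  fixes s :: real
  assumes g_f: "u \<in> Q \<Longrightarrow> g (f u) - s *\<^sub>R u \<in> P"
    and f_g: "v \<in> Q' \<Longrightarrow> f (g v) - s *\<^sub>R v \<in> P'"
begin

lemma swap: "quasi_inverse Q' P' Q P g f s"
  by (intro quasi_inverse.intro quasi_inverse_axioms.intro g.filtered_map_axioms f.filtered_map_axioms
      f_g g_f)

lemma induced_g_f:
  assumes "C \<in> Q // quot_rel Q P"
  shows "induced g (quot_rel Q P) (induced f (quot_rel Q' P') C) = induced (scaleR s) (quot_rel Q P) C"
proof -
  have "induced g (quot_rel Q P) (induced f (quot_rel Q' P') C) = induced (g \<circ> f) (quot_rel Q P) C"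
    by (rule induced_comp[OF f.filtered_map_axioms g.filtered_map_axioms assms])
  also have "\<dots> = induced (scaleR s) (quot_rel Q P) C"
    using g_f f.f_Q g.f_Q subspace_scale[OF f.subspace_Q]
    by (intro induced_cong[OF f.subspace_P f.subspace_P assms]) auto
  finally show ?thesis .
qed

lemma induced_f_g:
  "D \<in> Q' // quot_rel Q' P' \<Longrightarrow>
    induced f (quot_rel Q' P') (induced g (quot_rel Q P) D) = induced (scaleR s) (quot_rel Q' P') D"
  by (rule quasi_inverse.induced_g_f[OF swap])

lemma induced_inverse:
  assumes "s \<noteq> 0"
  shows "bij_betw (induced f (quot_rel Q' P')) (Q // quot_rel Q P) (Q' // quot_rel Q' P')"
    and "D \<in> Q' // quot_rel Q' P' \<Longrightarrow>
      the_inv_into (Q // quot_rel Q P) (induced f (quot_rel Q' P')) D =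
        induced (scaleR (1 / s)) (quot_rel Q P) (induced g (quot_rel Q P) D)"
proof -
  define h where "h D = induced (scaleR (1 / s)) (quot_rel Q P) (induced g (quot_rel Q P) D)" for D
  have h_in: "h D \<in> Q // quot_rel Q P" if "D \<in> Q' // quot_rel Q' P'" for D
    unfolding h_def
    by (intro filtered_map.induced_in_quotient[OF filtered_map_scaleR[OF f.subspace_Q f.subspace_P]]
        g.induced_in_quotient that)
  have h_f: "h (induced f (quot_rel Q' P') C) = C" if C: "C \<in> Q // quot_rel Q P" for C
    unfolding h_def induced_g_f[OF C] induced_scaleR_scaleR[OF f.subspace_Q f.subspace_P C]
    using assms induced_scaleR_1[OF f.subspace_P C] by simp
  have f_h: "induced f (quot_rel Q' P') (h D) = D" if D: "D \<in> Q' // quot_rel Q' P'" for D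
    unfolding h_def f.induced_scaleR_commute[OF g.induced_in_quotient[OF D]] induced_f_g[OF D]
      induced_scaleR_scaleR[OF g.subspace_Q g.subspace_P D]
    using assms induced_scaleR_1[OF g.subspace_P D] by simp
  show bij: "bij_betw (induced f (quot_rel Q' P')) (Q // quot_rel Q P) (Q' // quot_rel Q' P')"
    by (rule bij_betw_byWitness[where f' = h]) (use h_f f_h h_in f.induced_in_quotient in auto)
  show "the_inv_into (Q // quot_rel Q P) (induced f (quot_rel Q' P')) D = h D"
    if "D \<in> Q' // quot_rel Q' P'"
    by (rule the_inv_into_f_eq[OF bij_betw_imp_inj_on[OF bij] f_h[OF that] h_in[OF that]])
qed

lemma induced_quasi_inverse:
  "(\<forall>C \<in> Q // quot_rel Q P. \<exists>D \<in> Q' // quot_rel Q' P'. f ` C \<subseteq> D)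
 \<and> (\<forall>D \<in> Q' // quot_rel Q' P'. \<exists>C \<in> Q // quot_rel Q P. g ` D \<subseteq> C)
 \<and> (\<forall>C \<in> Q // quot_rel Q P.
      induced g (quot_rel Q P) (induced f (quot_rel Q' P') C) = induced (scaleR s) (quot_rel Q P) C)
 \<and> (\<forall>D \<in> Q' // quot_rel Q' P'.
      induced f (quot_rel Q' P') (induced g (quot_rel Q P) D) = induced (scaleR s) (quot_rel Q' P') D)
 \<and> (s \<noteq> 0 \<longrightarrow> bij_betw (induced f (quot_rel Q' P')) (Q // quot_rel Q P) (Q' // quot_rel Q' P')
    \<and> (\<forall>D \<in> Q' // quot_rel Q' P'. the_inv_into (Q // quot_rel Q P) (induced f (quot_rel Q' P')) D =
        induced (scaleR (1 / s)) (quot_rel Q P) (induced g (quot_rel Q P) D)))"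
proof (intro conjI ballI impI)
  show "\<exists>D \<in> Q' // quot_rel Q' P'. f ` C \<subseteq> D" if "C \<in> Q // quot_rel Q P" for C
    using f.induced_in_quotient[OF that] f.image_subset_induced[OF that] by blast
  show "\<exists>C \<in> Q // quot_rel Q P. g ` D \<subseteq> C" if "D \<in> Q' // quot_rel Q' P'" for D
    using g.induced_in_quotient[OF that] g.image_subset_induced[OF that] by blast
qed (simp_all add: induced_g_f induced_f_g induced_inverse)

end

section \<open>Smooth functions\<close>

lemma frechet_derivative_apply:
  "(f has_derivative f') (at x) \<Longrightarrow> frechet_derivative f (at x) v = f' v"
  by (metis frechet_derivative_at)

lemma iter_deriv_append: "iter_deriv vs (iter_deriv ws f) = iter_deriv (vs @ ws) f"
  by (induction vs) auto

lemma smooth_fun_differentiable: "smooth_fun f \<Longrightarrow> f differentiable (at x)"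
  unfolding smooth_fun_def by (metis iter_deriv.simps(1))

lemma smooth_fun_frechet_derivative:
  assumes "smooth_fun f"
  shows "smooth_fun (\<lambda>x. frechet_derivative f (at x) v)"
proof -
  have "iter_deriv vs (\<lambda>x. frechet_derivative f (at x) v) = iter_deriv (vs @ [v]) f" for vs
    using iter_deriv_append[of vs "[v]" f] by simp
  then show ?thesis
    using assms unfolding smooth_fun_def by metis
qed

lemma smooth_funI:
  assumes "\<And>x. f differentiable (at x)" "\<And>v. smooth_fun (\<lambda>x. frechet_derivative f (at x) v)"
  shows "smooth_fun f"
  unfolding smooth_fun_def
proof (intro allI)
  fix vs x
  show "iter_deriv vs f differentiable at x"
  proof (cases vs rule: rev_exhaust)
    case Nil
    then show ?thesis using assms(1) by simp
  next
    case (snoc ws v)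
    then have "iter_deriv vs f = iter_deriv ws (\<lambda>x. frechet_derivative f (at x) v)"
      using iter_deriv_append[of ws "[v]" f] by simp
    then show ?thesis
      using assms(2)[of v] unfolding smooth_fun_def by simp
  qed
qed

lemma smooth_fun_const: "smooth_fun (\<lambda>x. c)"
proof -
  have "\<exists>d. iter_deriv vs (\<lambda>x::'a. c) = (\<lambda>x. d)" for vs c
    by (induction vs) auto
  then show ?thesis
    unfolding smooth_fun_def by (metis differentiable_const)
qed

lemma smooth_fun_bounded_linear: "bounded_linear L \<Longrightarrow> smooth_fun L"
  by (rule smooth_funI)
    (simp_all add: bounded_linear_imp_differentiable smooth_fun_const
      frechet_derivative_apply[OF bounded_linear_imp_has_derivative])

lemma smooth_fun_add:
  assumes "smooth_fun f" "smooth_fun g"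
  shows "smooth_fun (\<lambda>x. f x + g x)"
proof -
  have "iter_deriv vs (\<lambda>x. f x + g x) = (\<lambda>x. iter_deriv vs f x + iter_deriv vs g x)" for vs
  proof (induction vs)
    case (Cons v vs)
    have "\<And>x. iter_deriv vs f differentiable at x" "\<And>x. iter_deriv vs g differentiable at x"
      using assms unfolding smooth_fun_def by auto
    then show ?case
      by (simp add: Cons fun_eq_iff frechet_derivative_apply[OF has_derivative_add]
          frechet_derivative_works)
  qed simp
  then show ?thesis
    using assms unfolding smooth_fun_def by (simp add: differentiable_add)
qed

(* By the Leibniz rule, every iterated derivative of f * g is a leibniz_term f g. *)
inductive leibniz_term ::
  "('a::real_normed_vector \<Rightarrow> real) \<Rightarrow> ('a \<Rightarrow> real) \<Rightarrow> ('a \<Rightarrow> real) \<Rightarrow> bool"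
  for f g where
  product: "leibniz_term f g (\<lambda>x. iter_deriv as f x * iter_deriv bs g x)"
| add: "leibniz_term f g h1 \<Longrightarrow> leibniz_term f g h2 \<Longrightarrow>
    leibniz_term f g (\<lambda>x. h1 x + h2 x)"

lemma leibniz_term_deriv:
  assumes "smooth_fun f" "smooth_fun g" "leibniz_term f g h"
  shows "(\<forall>x. h differentiable (at x)) \<and>
    (\<forall>v. leibniz_term f g (\<lambda>x. frechet_derivative h (at x) v))"
  using assms(3)
proof induction
  case (product as bs)
  define F where "F = iter_deriv as f"
  define G where "G = iter_deriv bs g"
  have "(F has_derivative frechet_derivative F (at x)) (at x)"
    and "(G has_derivative frechet_derivative G (at x)) (at x)" for x
    using assms(1,2) unfolding smooth_fun_def F_def G_def frechet_derivative_works[symmetric] by blast+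
  then have H: "((\<lambda>x. F x * G x) has_derivative
      (\<lambda>y. F x * frechet_derivative G (at x) y + frechet_derivative F (at x) y * G x)) (at x)" for x
    by (rule has_derivative_mult)
  have "(\<lambda>x. frechet_derivative (\<lambda>x. F x * G x) (at x) v) =
      (\<lambda>x. iter_deriv as f x * iter_deriv (v # bs) g x + iter_deriv (v # as) f x * iter_deriv bs g x)" for v
    by (rule ext, subst frechet_derivative_apply[OF H]) (simp add: F_def G_def)
  moreover have "(\<lambda>x. F x * G x) differentiable (at x)" for x
    using H[of x] by (rule differentiableI)
  moreover have "leibniz_term f g
      (\<lambda>x. iter_deriv as f x * iter_deriv (v # bs) g x + iter_deriv (v # as) f x * iter_deriv bs g x)" for v
    by (intro leibniz_term.add leibniz_term.product)
  ultimately show ?case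
    unfolding F_def G_def by simp
next
  case (add h1 h2)
  then have "(\<lambda>x. frechet_derivative (\<lambda>x. h1 x + h2 x) (at x) v) =
      (\<lambda>x. frechet_derivative h1 (at x) v + frechet_derivative h2 (at x) v)" for v
    by (simp add: fun_eq_iff frechet_derivative_apply[OF has_derivative_add] frechet_derivative_works)
  with add show ?case
    by (auto intro: leibniz_term.add differentiable_add)
qed

lemma smooth_fun_mult:
  assumes "smooth_fun f" "smooth_fun g"
  shows "smooth_fun (\<lambda>x. f x * g x)"
proof -
  have "leibniz_term f g (iter_deriv vs (\<lambda>x. f x * g x))" for vs
  proof (induction vs)
    case Nil
    show ?case using leibniz_term.product[of f g "[]" "[]"] by simp
  next
    case (Cons v vs)
    then show ?case using leibniz_term_deriv[OF assms] by simp
  qed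
  then show ?thesis
    using leibniz_term_deriv[OF assms] unfolding smooth_fun_def by blast
qed

section \<open>Symbols polynomial in the fibre variable\<close>

definition monomial :: "('a::euclidean_space \<Rightarrow> nat) \<Rightarrow> 'a \<Rightarrow> real" where
  "monomial e \<xi> = (\<Prod>b\<in>Basis. (\<xi> \<bullet> b) ^ e b)"

lemma hom_polyE:
  assumes "hom_poly k S"
  obtains E c where "finite E" "\<And>e. e \<in> E \<Longrightarrow> sum e Basis = k"
    "\<And>e. e \<in> E \<Longrightarrow> smooth_fun (c e)" "S = (\<lambda>x \<xi>. \<Sum>e\<in>E. c e x * monomial e \<xi>)"
proof -
  obtain E c where "finite E" "\<forall>e\<in>E. sum e Basis = k \<and> smooth_fun (c e)"
    "\<forall>x \<xi>. S x \<xi> = (\<Sum>e\<in>E. c e x * (\<Prod>b\<in>Basis. (\<xi> \<bullet> b) ^ e b))"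
    using assms unfolding hom_poly_def by blast
  then show ?thesis
    by (intro that[of E c] ext) (auto simp: monomial_def)
qed

lemma hom_polyI:
  assumes "finite E" "\<And>e. e \<in> E \<Longrightarrow> sum e Basis = k"
    "\<And>e. e \<in> E \<Longrightarrow> smooth_fun (c e)" "\<And>x \<xi>. S x \<xi> = (\<Sum>e\<in>E. c e x * monomial e \<xi>)"
  shows "hom_poly k S"
  unfolding hom_poly_def using assms unfolding monomial_def by blast

lemma hom_poly_zero: "hom_poly k 0"
  by (rule hom_polyI[of "{}"]) auto

lemma hom_poly_monomial:
  "smooth_fun c \<Longrightarrow> sum e Basis = k \<Longrightarrow> hom_poly k (\<lambda>x \<xi>. c x * monomial e \<xi>)"
  by (rule hom_polyI[of "{e}" k "\<lambda>_. c"]) auto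

lemma hom_poly_add:
  assumes "hom_poly k S" "hom_poly k T"
  shows "hom_poly k (\<lambda>x \<xi>. S x \<xi> + T x \<xi>)"
proof -
  obtain E1 c1 where 1: "finite E1" "\<And>e. e \<in> E1 \<Longrightarrow> sum e Basis = k"
    "\<And>e. e \<in> E1 \<Longrightarrow> smooth_fun (c1 e)" "S = (\<lambda>x \<xi>. \<Sum>e\<in>E1. c1 e x * monomial e \<xi>)"
    using hom_polyE[OF assms(1)] by blast
  obtain E2 c2 where 2: "finite E2" "\<And>e. e \<in> E2 \<Longrightarrow> sum e Basis = k"
    "\<And>e. e \<in> E2 \<Longrightarrow> smooth_fun (c2 e)" "T = (\<lambda>x \<xi>. \<Sum>e\<in>E2. c2 e x * monomial e \<xi>)"
    using hom_polyE[OF assms(2)] by blast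
  define c where "c e x = (if e \<in> E1 then c1 e x else 0) + (if e \<in> E2 then c2 e x else 0)" for e x
  show ?thesis
  proof (rule hom_polyI[of "E1 \<union> E2" k c])
    have if_smooth: "smooth_fun (\<lambda>x. if P then f x else 0)" if "P \<Longrightarrow> smooth_fun f" for P f
      using that by (cases P) (simp_all add: smooth_fun_const)
    show "smooth_fun (c e)" for e
      unfolding c_def by (intro smooth_fun_add if_smooth) (auto intro: 1(3) 2(3))
    have "(\<Sum>e\<in>E1 \<union> E2. c e x * monomial e \<xi>) =
        (\<Sum>e\<in>E1 \<union> E2. if e \<in> E1 then c1 e x * monomial e \<xi> else 0) +
        (\<Sum>e\<in>E1 \<union> E2. if e \<in> E2 then c2 e x * monomial e \<xi> else 0)" for x \<xi>
      unfolding c_def sum.distrib[symmetric] by (rule sum.cong) (auto simp: algebra_simps)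
    then show "S x \<xi> + T x \<xi> = (\<Sum>e\<in>E1 \<union> E2. c e x * monomial e \<xi>)" for x \<xi>
      using 1 2 by (simp add: sum.inter_restrict[symmetric] Int_absorb1)
  qed (use 1 2 in auto)
qed

lemma hom_poly_sum:
  "finite I \<Longrightarrow> (\<And>i. i \<in> I \<Longrightarrow> hom_poly k (S i)) \<Longrightarrow>
    hom_poly k (\<lambda>x \<xi>. \<Sum>i\<in>I. S i x \<xi>)"
  by (induction I rule: finite_induct)
    (auto intro: hom_poly_add hom_poly_zero[unfolded zero_fun_def])

lemma hom_poly_mult_smooth:
  assumes "hom_poly k S" "smooth_fun a"
  shows "hom_poly k (\<lambda>x \<xi>. a x * S x \<xi>)"
proof -
  obtain E c where rep: "finite E" "\<And>e. e \<in> E \<Longrightarrow> sum e Basis = k"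
    "\<And>e. e \<in> E \<Longrightarrow> smooth_fun (c e)" "S = (\<lambda>x \<xi>. \<Sum>e\<in>E. c e x * monomial e \<xi>)"
    using hom_polyE[OF assms(1)] by blast
  have "hom_poly k (\<lambda>x \<xi>. \<Sum>e\<in>E. (a x * c e x) * monomial e \<xi>)"
    using rep assms(2) by (intro hom_poly_sum hom_poly_monomial smooth_fun_mult) auto
  then show ?thesis
    unfolding rep(4) by (simp add: sum_distrib_left mult.assoc)
qed

lemma hom_poly_scale: "hom_poly k S \<Longrightarrow> hom_poly k (\<lambda>x \<xi>. a * S x \<xi>)"
  using hom_poly_mult_smooth[OF _ smooth_fun_const] .

lemma hom_poly_diff:
  "hom_poly k S \<Longrightarrow> hom_poly k T \<Longrightarrow> hom_poly k (\<lambda>x \<xi>. S x \<xi> - T x \<xi>)"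
  using hom_poly_add[OF _ hom_poly_scale[of k T "-1"]] by simp

lemma subspace_Rsp: "subspace (Rsp k)"
  unfolding subspace_def Rsp_def
  using hom_poly_zero hom_poly_add hom_poly_scale by (auto simp: plus_fun_def scaleR_fun_def)

lemma monomial_upd:
  assumes "b \<in> (Basis::'a::euclidean_space set)"
  shows "monomial (e(b := n)) \<xi> = (\<xi> \<bullet> b) ^ n * (\<Prod>b'\<in>Basis - {b}. (\<xi> \<bullet> b') ^ e b')"
  unfolding monomial_def using assms by (simp add: prod.remove)

lemma hom_poly_mult_coord:
  assumes "hom_poly k S" "b \<in> Basis"
  shows "hom_poly (Suc k) (\<lambda>x \<xi>. (\<xi> \<bullet> b) * S x \<xi>)"
proof -
  obtain E c where rep: "finite E" "\<And>e. e \<in> E \<Longrightarrow> sum e Basis = k"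
    "\<And>e. e \<in> E \<Longrightarrow> smooth_fun (c e)" "S = (\<lambda>x \<xi>. \<Sum>e\<in>E. c e x * monomial e \<xi>)"
    using hom_polyE[OF assms(1)] by blast
  have "sum (e(b := Suc (e b))) Basis = Suc k" if "e \<in> E" for e
    using rep(2)[OF that] assms(2) by (simp add: sum.remove)
  then have "hom_poly (Suc k) (\<lambda>x \<xi>. \<Sum>e\<in>E. c e x * monomial (e(b := Suc (e b))) \<xi>)"
    using rep by (intro hom_poly_sum hom_poly_monomial) auto
  moreover have "monomial (e(b := Suc (e b))) \<xi> = (\<xi> \<bullet> b) * monomial e \<xi>" for e \<xi>
    using monomial_upd[OF assms(2), of e] monomial_upd[OF assms(2), of e "e b"] by simp
  ultimately show ?thesis
    unfolding rep(4) by (simp add: sum_distrib_left algebra_simps)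
qed

definition monomial_deriv :: "('a::euclidean_space \<Rightarrow> nat) \<Rightarrow> 'a \<Rightarrow> 'a \<Rightarrow> real" where
  "monomial_deriv e \<xi> y = (\<Sum>b\<in>Basis.
      (of_nat (e b) * (y \<bullet> b) * (\<xi> \<bullet> b) ^ (e b - 1)) * (\<Prod>j\<in>Basis - {b}. (\<xi> \<bullet> j) ^ e j))"

lemma has_derivative_monomial: "(monomial e has_derivative monomial_deriv e \<xi>) (at \<xi>)"
  unfolding monomial_def[abs_def] monomial_deriv_def
  by (intro has_derivative_prod has_derivative_power has_derivative_inner_left has_derivative_ident)

lemma monomial_deriv_Basis:
  assumes "b \<in> Basis"
  shows "monomial_deriv e \<xi> b = of_nat (e b) * monomial (e(b := e b - 1)) \<xi>"
proof -
  have "monomial_deriv e \<xi> b = (\<Sum>b'\<in>Basis. if b' = b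
      then (of_nat (e b) * (\<xi> \<bullet> b) ^ (e b - 1)) * (\<Prod>j\<in>Basis - {b}. (\<xi> \<bullet> j) ^ e j) else 0)"
    unfolding monomial_deriv_def using assms by (intro sum.cong) (auto simp: inner_Basis inner_commute)
  then show ?thesis
    using assms by (simp add: monomial_upd)
qed

lemma monomial_deriv_self: "monomial_deriv e \<xi> \<xi> = of_nat (sum e Basis) * monomial e \<xi>"
proof -
  have "monomial_deriv e \<xi> \<xi> = (\<Sum>b\<in>Basis. of_nat (e b) * monomial e \<xi>)"
    unfolding monomial_deriv_def
  proof (rule sum.cong)
    fix b :: 'a assume b: "b \<in> Basis"
    have eq: "of_nat (e b) * (\<xi> \<bullet> b) * (\<xi> \<bullet> b) ^ (e b - 1) = of_nat (e b) * (\<xi> \<bullet> b) ^ e b"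
      by (cases "e b") auto
    have "monomial e \<xi> = (\<xi> \<bullet> b) ^ e b * (\<Prod>j\<in>Basis - {b}. (\<xi> \<bullet> j) ^ e j)"
      using monomial_upd[OF b, of e "e b"] by simp
    then show "of_nat (e b) * (\<xi> \<bullet> b) * (\<xi> \<bullet> b) ^ (e b - 1) * (\<Prod>j\<in>Basis - {b}. (\<xi> \<bullet> j) ^ e j) =
        of_nat (e b) * monomial e \<xi>"
      by (subst eq) (simp add: mult.assoc)
  qed simp
  then show ?thesis by (simp add: sum_distrib_right)
qed

lemma has_derivative_coeff_sum:
  assumes "\<And>e. e \<in> E \<Longrightarrow> smooth_fun (c e)"
  shows "((\<lambda>y. \<Sum>e\<in>E. c e y * g e \<xi>) has_derivative
    (\<lambda>v. \<Sum>e\<in>E. frechet_derivative (c e) (at x) v * g e \<xi>)) (at x)"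
proof -
  have "(c e has_derivative frechet_derivative (c e) (at x)) (at x)" if "e \<in> E" for e
    by (rule frechet_derivative_works[THEN iffD1, OF smooth_fun_differentiable[OF assms[OF that]]])
  then show ?thesis
    by (intro has_derivative_sum has_derivative_mult_left)
qed

lemma pdx_coeff_sum:
  assumes "\<And>e. e \<in> E \<Longrightarrow> smooth_fun (c e)"
  shows "pdx v (\<lambda>x \<xi>. \<Sum>e\<in>E. c e x * g e \<xi>) x \<xi> =
    (\<Sum>e\<in>E. frechet_derivative (c e) (at x) v * g e \<xi>)"
  unfolding pdx_def by (rule frechet_derivative_apply[OF has_derivative_coeff_sum[OF assms]])

lemma has_derivative_monomial_sum:
  "((\<lambda>\<eta>. \<Sum>e\<in>E. c e x * monomial e \<eta>) has_derivative
    (\<lambda>w. \<Sum>e\<in>E. c e x * monomial_deriv e \<xi> w)) (at \<xi>)"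
  by (intro has_derivative_sum has_derivative_mult_right has_derivative_monomial)

lemma pdxi_monomial_sum:
  "pdxi w (\<lambda>x \<xi>. \<Sum>e\<in>E. c e x * monomial e \<xi>) x \<xi> =
    (\<Sum>e\<in>E. c e x * monomial_deriv e \<xi> w)"
  unfolding pdxi_def by (rule frechet_derivative_apply[OF has_derivative_monomial_sum])

lemma hom_poly_has_derivative_x:
  assumes "hom_poly k S"
  shows "((\<lambda>y. S y \<xi>) has_derivative (\<lambda>v. pdx v S x \<xi>)) (at x)"
proof -
  obtain E c where rep: "finite E" "\<And>e. e \<in> E \<Longrightarrow> sum e Basis = k"
    "\<And>e. e \<in> E \<Longrightarrow> smooth_fun (c e)" "S = (\<lambda>x \<xi>. \<Sum>e\<in>E. c e x * monomial e \<xi>)"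
    using hom_polyE[OF assms] by blast
  then have "(\<lambda>y. S y \<xi>) differentiable (at x)"
    using differentiableI[OF has_derivative_coeff_sum[OF rep(3)]] by simp
  then show ?thesis
    unfolding pdx_def by (rule frechet_derivative_works[THEN iffD1])
qed

lemma hom_poly_has_derivative_xi:
  assumes "hom_poly k S"
  shows "((\<lambda>\<eta>. S x \<eta>) has_derivative (\<lambda>w. pdxi w S x \<xi>)) (at \<xi>)"
proof -
  obtain E c where rep: "finite E" "\<And>e. e \<in> E \<Longrightarrow> sum e Basis = k"
    "\<And>e. e \<in> E \<Longrightarrow> smooth_fun (c e)" "S = (\<lambda>x \<xi>. \<Sum>e\<in>E. c e x * monomial e \<xi>)"
    using hom_polyE[OF assms] by blast
  then have "(\<lambda>\<eta>. S x \<eta>) differentiable (at \<xi>)"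
    using differentiableI[OF has_derivative_monomial_sum] by simp
  then show ?thesis
    unfolding pdxi_def by (rule frechet_derivative_works[THEN iffD1])
qed

lemma linear_pdx: "hom_poly k S \<Longrightarrow> linear (\<lambda>v. pdx v S x \<xi>)"
  using hom_poly_has_derivative_x has_derivative_linear by blast

lemma linear_pdxi: "hom_poly k S \<Longrightarrow> linear (\<lambda>w. pdxi w S x \<xi>)"
  using hom_poly_has_derivative_xi has_derivative_linear by blast

lemma hom_poly_pdx:
  assumes "hom_poly k S"
  shows "hom_poly k (pdx v S)"
proof -
  obtain E c where rep: "finite E" "\<And>e. e \<in> E \<Longrightarrow> sum e Basis = k"
    "\<And>e. e \<in> E \<Longrightarrow> smooth_fun (c e)" "S = (\<lambda>x \<xi>. \<Sum>e\<in>E. c e x * monomial e \<xi>)"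
    using hom_polyE[OF assms] by blast
  have "pdx v S = (\<lambda>x \<xi>. \<Sum>e\<in>E. frechet_derivative (c e) (at x) v * monomial e \<xi>)"
    unfolding rep(4) by (intro ext pdx_coeff_sum rep(3))
  moreover have "hom_poly k (\<lambda>x \<xi>. \<Sum>e\<in>E. frechet_derivative (c e) (at x) v * monomial e \<xi>)"
    using rep by (intro hom_poly_sum hom_poly_monomial smooth_fun_frechet_derivative) auto
  ultimately show ?thesis by simp
qed

lemma hom_poly_pdxi_Basis:
  assumes "hom_poly k S" "b \<in> Basis"
  shows "hom_poly (k - 1) (pdxi b S)"
proof -
  obtain E c where rep: "finite E" "\<And>e. e \<in> E \<Longrightarrow> sum e Basis = k"
    "\<And>e. e \<in> E \<Longrightarrow> smooth_fun (c e)" "S = (\<lambda>x \<xi>. \<Sum>e\<in>E. c e x * monomial e \<xi>)"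
    using hom_polyE[OF assms(1)] by blast
  have "hom_poly (k - 1) (\<lambda>x \<xi>. (of_nat (e b) * c e x) * monomial (e(b := e b - 1)) \<xi>)"
    if "e \<in> E" for e
  proof (cases "e b = 0")
    case False
    then have "sum (e(b := e b - 1)) Basis = k - 1"
      using rep(2)[OF that] assms(2) by (simp add: sum.remove)
    then show ?thesis
      using rep(3)[OF that] by (intro hom_poly_monomial smooth_fun_mult smooth_fun_const)
  qed (use hom_poly_zero in \<open>simp add: zero_fun_def\<close>)
  then have "hom_poly (k - 1) (\<lambda>x \<xi>. \<Sum>e\<in>E. (of_nat (e b) * c e x) * monomial (e(b := e b - 1)) \<xi>)"
    by (rule hom_poly_sum[OF rep(1)])
  moreover have "pdxi b S = (\<lambda>x \<xi>. \<Sum>e\<in>E. (of_nat (e b) * c e x) * monomial (e(b := e b - 1)) \<xi>)"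
    unfolding rep(4) pdxi_monomial_sum monomial_deriv_Basis[OF assms(2)] by (intro ext sum.cong) auto
  ultimately show ?thesis by simp
qed

lemma pdx_pdxi_commute:
  assumes "hom_poly k S"
  shows "pdx v (pdxi w S) x \<xi> = pdxi w (pdx v S) x \<xi>"
proof -
  obtain E c where rep: "finite E" "\<And>e. e \<in> E \<Longrightarrow> sum e Basis = k"
    "\<And>e. e \<in> E \<Longrightarrow> smooth_fun (c e)" "S = (\<lambda>x \<xi>. \<Sum>e\<in>E. c e x * monomial e \<xi>)"
    using hom_polyE[OF assms] by blast
  have "pdxi w S = (\<lambda>x \<xi>. \<Sum>e\<in>E. c e x * monomial_deriv e \<xi> w)"
    unfolding rep(4) by (intro ext pdxi_monomial_sum)
  moreover have "pdx v S = (\<lambda>x \<xi>. \<Sum>e\<in>E. frechet_derivative (c e) (at x) v * monomial e \<xi>)"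
    unfolding rep(4) by (intro ext pdx_coeff_sum rep(3))
  moreover have "pdx v (\<lambda>x \<xi>. \<Sum>e\<in>E. c e x * monomial_deriv e \<xi> w) x \<xi> =
      (\<Sum>e\<in>E. frechet_derivative (c e) (at x) v * monomial_deriv e \<xi> w)"
    using pdx_coeff_sum[where g = "\<lambda>e \<xi>. monomial_deriv e \<xi> w", OF rep(3)] by simp
  ultimately show ?thesis
    by (simp add: pdxi_monomial_sum)
qed

lemma hom_poly_euler:
  assumes "hom_poly k S"
  shows "pdxi \<xi> S x \<xi> = real k * S x \<xi>"
proof -
  obtain E c where rep: "finite E" "\<And>e. e \<in> E \<Longrightarrow> sum e Basis = k"
    "\<And>e. e \<in> E \<Longrightarrow> smooth_fun (c e)" "S = (\<lambda>x \<xi>. \<Sum>e\<in>E. c e x * monomial e \<xi>)"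
    using hom_polyE[OF assms] by blast
  show ?thesis
    unfolding rep(4) pdxi_monomial_sum monomial_deriv_self
    by (simp add: sum_distrib_left rep(2) algebra_simps cong: sum.cong)
qed

lemma hom_poly_0_pdxi_Basis:
  assumes "hom_poly 0 S" "b \<in> Basis"
  shows "pdxi b S x \<xi> = 0"
proof -
  obtain E c where rep: "finite E" "\<And>e. e \<in> E \<Longrightarrow> sum e Basis = 0"
    "\<And>e. e \<in> E \<Longrightarrow> smooth_fun (c e)" "S = (\<lambda>x \<xi>. \<Sum>e\<in>E. c e x * monomial e \<xi>)"
    using hom_polyE[OF assms(1)] by blast
  have "e b = 0" if "e \<in> E" for e
    using rep(2)[OF that] assms(2) by (simp add: sum.remove)
  then show ?thesis
    unfolding rep(4) pdxi_monomial_sum monomial_deriv_Basis[OF assms(2)] by (intro sum.neutral) simp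
qed

lemma dq_Basis: "dq i \<in> Basis"
  by (auto simp: dq_def Basis_prod_def Basis_vec_def zero_prod_def)

lemma dp_Basis: "dp i \<in> Basis"
  unfolding dp_def Basis_prod_def zero_prod_def[symmetric]
  by (intro UnI2 imageI UnI1) (auto simp: Basis_vec_def)

lemma dt_Basis: "dt \<in> Basis"
  unfolding dt_def Basis_prod_def by (intro UnI2 imageI) simp

lemma qc_inner: "qc \<xi> i = \<xi> \<bullet> dq i"
  by (simp add: qc_def dq_def inner_prod_def inner_axis)

lemma pc_inner: "pc \<xi> i = \<xi> \<bullet> dp i"
  by (simp add: pc_def dp_def inner_prod_def inner_axis)

lemma tc_inner: "tc \<xi> = \<xi> \<bullet> dt"
  by (simp add: tc_def dt_def inner_prod_def)

lemma coords_linear [simp]: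
  "qc (a + b) i = qc a i + qc b i" "pc (a + b) i = pc a i + pc b i" "tc (a + b) = tc a + tc b"
  "qc (c *\<^sub>R a) i = c * qc a i" "pc (c *\<^sub>R a) i = c * pc a i" "tc (c *\<^sub>R a) = c * tc a"
  "qc 0 i = 0" "pc 0 i = 0" "tc 0 = 0"
  by (simp_all add: qc_def pc_def tc_def)

lemma pt_eqI:
  fixes a b :: "'n::finite pt"
  assumes "\<And>i. qc a i = qc b i" "\<And>i. pc a i = pc b i" "tc a = tc b"
  shows "a = b"
  using assms by (cases a, cases b) (auto simp: qc_def pc_def tc_def vec_eq_iff)

lemma pt_decomp:
  fixes z :: "'n::finite pt"
  shows "z = (\<Sum>i\<in>UNIV. qc z i *\<^sub>R dq i + pc z i *\<^sub>R dp i) + tc z *\<^sub>R dt"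
proof -
  obtain a b c where z: "z = (a, b, c)" by (cases z) auto
  have axis_sum: "(\<Sum>i\<in>UNIV. (v $ i) *\<^sub>R axis i (1::real)) = v" for v :: "real^'n"
    by (simp add: vec_eq_iff axis_def if_distrib cong: if_cong)
  show ?thesis
    unfolding z
    by (simp add: qc_def pc_def tc_def dq_def dp_def dt_def prod_eq_iff fst_sum snd_sum axis_sum)
qed

lemma linear_coords_expand:
  fixes L :: "'n::finite pt \<Rightarrow> real"
  assumes "linear L"
  shows "L z = (\<Sum>i\<in>UNIV. qc z i * L (dq i) + pc z i * L (dp i)) + tc z * L dt"
  by (subst pt_decomp[of z]) (simp add: assms linear_add linear_sum linear_cmul)

lemma pdx_expand:
  "hom_poly k T \<Longrightarrow>
    pdx z T x \<xi> =
      (\<Sum>i\<in>UNIV. qc z i * pdx (dq i) T x \<xi> + pc z i * pdx (dp i) T x \<xi>) + tc z * pdx dt T x \<xi>"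
  by (rule linear_coords_expand[OF linear_pdx])

lemma pdxi_expand:
  "hom_poly k T \<Longrightarrow>
    pdxi z T x \<xi> =
      (\<Sum>i\<in>UNIV. qc z i * pdxi (dq i) T x \<xi> + pc z i * pdxi (dp i) T x \<xi>) + tc z * pdxi dt T x \<xi>"
  by (rule linear_coords_expand[OF linear_pdxi])

lemma hom_poly_pdxi:
  fixes S :: "'n::finite pt \<Rightarrow> 'n pt \<Rightarrow> real"
  assumes "hom_poly k S"
  shows "hom_poly (k - 1) (pdxi w S)"
proof -
  have "hom_poly (k - 1) (\<lambda>x \<xi>. (\<Sum>i\<in>UNIV. qc w i * pdxi (dq i) S x \<xi> + pc w i * pdxi (dp i) S x \<xi>)
      + tc w * pdxi dt S x \<xi>)"
    by (intro hom_poly_add hom_poly_sum hom_poly_scale hom_poly_pdxi_Basis[OF assms]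
        dq_Basis dp_Basis dt_Basis finite)
  moreover have "pdxi w S = (\<lambda>x \<xi>. (\<Sum>i\<in>UNIV. qc w i * pdxi (dq i) S x \<xi> + pc w i * pdxi (dp i) S x \<xi>)
      + tc w * pdxi dt S x \<xi>)"
    by (intro ext pdxi_expand[OF assms])
  ultimately show ?thesis by simp
qed

lemma bounded_linear_coords:
  "bounded_linear (\<lambda>\<xi>. qc \<xi> i)" "bounded_linear (\<lambda>\<xi>. pc \<xi> i)" "bounded_linear tc"
  unfolding qc_inner pc_inner tc_inner[abs_def] by (rule bounded_linear_inner_left)+

lemma has_derivative_coords:
  "((\<lambda>\<xi>. qc \<xi> i) has_derivative (\<lambda>w. qc w i)) F"
  "((\<lambda>\<xi>. pc \<xi> i) has_derivative (\<lambda>w. pc w i)) F"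
  "(tc has_derivative tc) F"
  by (rule bounded_linear_imp_has_derivative[OF bounded_linear_coords(1)]
      bounded_linear_imp_has_derivative[OF bounded_linear_coords(2)]
      bounded_linear_imp_has_derivative[OF bounded_linear_coords(3)])+

lemma smooth_fun_coords: "smooth_fun (\<lambda>x. qc x i)" "smooth_fun (\<lambda>x. pc x i)"
  by (rule smooth_fun_bounded_linear[OF bounded_linear_coords(1)]
      smooth_fun_bounded_linear[OF bounded_linear_coords(2)])+

lemma hom_poly_mult_coords:
  assumes "hom_poly k T"
  shows "hom_poly (Suc k) (\<lambda>x \<xi>. qc \<xi> i * T x \<xi>)" "hom_poly (Suc k) (\<lambda>x \<xi>. pc \<xi> i * T x \<xi>)"
    "hom_poly (Suc k) (\<lambda>x \<xi>. tc \<xi> * T x \<xi>)"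
  unfolding qc_inner pc_inner tc_inner
  by (rule hom_poly_mult_coord[OF assms dq_Basis] hom_poly_mult_coord[OF assms dp_Basis]
      hom_poly_mult_coord[OF assms dt_Basis])+

section \<open>The commutator of i(alpha) and X\<close>

lemma hom_poly_ialpha:
  assumes "hom_poly k S"
  shows "hom_poly (k - 1) (ialpha S)"
  unfolding ialpha_def
  by (intro hom_poly_scale hom_poly_diff hom_poly_sum hom_poly_mult_smooth smooth_fun_coords
      hom_poly_pdxi_Basis[OF assms] dq_Basis dp_Basis dt_Basis finite)

lemma hom_poly_Dop:
  assumes "hom_poly k S"
  shows "hom_poly (Suc k) (Dop S)"
proof -
  have "Dop S = (\<lambda>x \<xi>. (\<Sum>i\<in>UNIV. qc \<xi> i * pdx (dp i) S x \<xi> - pc \<xi> i * pdx (dq i) S x \<xi>)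
     + tc \<xi> * Es S x \<xi>
     - (\<Sum>i\<in>UNIV. pc x i * (pc \<xi> i * pdx dt S x \<xi>) + qc x i * (qc \<xi> i * pdx dt S x \<xi>)))"
    unfolding Dop_def Es_xi_def by (intro ext) (simp add: sum_distrib_left sum_distrib_right algebra_simps)
  moreover have "hom_poly k (Es S)"
    unfolding Es_def
    by (intro hom_poly_add hom_poly_sum hom_poly_mult_smooth smooth_fun_coords hom_poly_pdx[OF assms]
        finite)
  ultimately show ?thesis
    by (simp only:) (intro hom_poly_add hom_poly_diff hom_poly_sum hom_poly_mult_smooth
        hom_poly_mult_coords smooth_fun_coords hom_poly_pdx[OF assms] finite)
qed

lemma hom_poly_Xop:
  assumes "hom_poly k S"
  shows "hom_poly (Suc k) (Xop \<delta> k S)"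
  unfolding Xop_def mult.assoc
  by (intro hom_poly_add hom_poly_scale hom_poly_Dop hom_poly_mult_coords assms)

lemma pdx_linear:
  assumes "hom_poly j S" "hom_poly j' T"
  shows "pdx v (a *\<^sub>R S + b *\<^sub>R T) x \<xi> = a * pdx v S x \<xi> + b * pdx v T x \<xi>"
proof -
  have "((\<lambda>y. a * S y \<xi> + b * T y \<xi>) has_derivative
      (\<lambda>v. a * pdx v S x \<xi> + b * pdx v T x \<xi>)) (at x)"
    by (intro has_derivative_add has_derivative_mult_right hom_poly_has_derivative_x[OF assms(1)]
        hom_poly_has_derivative_x[OF assms(2)])
  then show ?thesis
    unfolding pdx_def by (simp add: frechet_derivative_apply)
qed

lemma pdxi_linear:
  assumes "hom_poly j S" "hom_poly j' T"
  shows "pdxi w (a *\<^sub>R S + b *\<^sub>R T) x \<xi> = a * pdxi w S x \<xi> + b * pdxi w T x \<xi>"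
proof -
  have "((\<lambda>\<eta>. a * S x \<eta> + b * T x \<eta>) has_derivative
      (\<lambda>w. a * pdxi w S x \<xi> + b * pdxi w T x \<xi>)) (at \<xi>)"
    by (intro has_derivative_add has_derivative_mult_right hom_poly_has_derivative_xi[OF assms(1)]
        hom_poly_has_derivative_xi[OF assms(2)])
  moreover have "(a *\<^sub>R S + b *\<^sub>R T) x = (\<lambda>\<eta>. a * S x \<eta> + b * T x \<eta>)"
    by (simp add: fun_eq_iff)
  ultimately show ?thesis
    unfolding pdxi_def[of w "a *\<^sub>R S + b *\<^sub>R T"] by (simp only: frechet_derivative_apply)
qed

lemma ialpha_linear:
  assumes "hom_poly j S" "hom_poly j' T"
  shows "ialpha (a *\<^sub>R S + b *\<^sub>R T) = a *\<^sub>R ialpha S + b *\<^sub>R ialpha T"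
  unfolding ialpha_def
  by (simp add: fun_eq_iff pdxi_linear[OF assms] algebra_simps sum.distrib sum_distrib_left sum_subtractf)

lemma Xop_linear:
  assumes "hom_poly j S" "hom_poly j' T"
  shows "Xop \<delta> k (a *\<^sub>R S + b *\<^sub>R T) = a *\<^sub>R Xop \<delta> k S + b *\<^sub>R Xop \<delta> k T"
  unfolding Xop_def Dop_def Es_def
  by (simp add: fun_eq_iff pdx_linear[OF assms] algebra_simps sum.distrib sum_distrib_left sum_subtractf)

definition Dop_dir :: "'n::finite pt \<Rightarrow> 'n pt \<Rightarrow> 'n pt" where
  "Dop_dir x \<eta> =
    (\<chi> i. tc \<eta> * qc x i - pc \<eta> i, \<chi> i. qc \<eta> i + tc \<eta> * pc x i, - Es_xi x \<eta>)"

definition ialpha_dir :: "'n::finite pt \<Rightarrow> 'n pt" where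
  "ialpha_dir x = (\<chi> i. pc x i, \<chi> i. - qc x i, -1)"

(* ialpha_dir is affine in x; this is its linear part. *)
definition ialpha_dir_deriv :: "'n::finite pt \<Rightarrow> 'n pt" where
  "ialpha_dir_deriv v = (\<chi> i. pc v i, \<chi> i. - qc v i, 0)"

lemma coords_dirs [simp]:
  "qc (Dop_dir x \<eta>) i = tc \<eta> * qc x i - pc \<eta> i"
  "pc (Dop_dir x \<eta>) i = qc \<eta> i + tc \<eta> * pc x i"
  "tc (Dop_dir x \<eta>) = - Es_xi x \<eta>"
  "qc (ialpha_dir x) i = pc x i" "pc (ialpha_dir x) i = - qc x i" "tc (ialpha_dir x) = -1"
  "qc (ialpha_dir_deriv v) i = pc v i" "pc (ialpha_dir_deriv v) i = - qc v i"
  "tc (ialpha_dir_deriv v) = 0"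
  by (simp_all add: Dop_dir_def ialpha_dir_def ialpha_dir_deriv_def qc_def pc_def tc_def)

lemma Dop_dir_ialpha_dir: "Dop_dir x (ialpha_dir x) = 0"
  by (rule pt_eqI) (auto simp: Es_xi_def algebra_simps sum_negf[symmetric] simp del: sum_negf)

lemma ialpha_dir_deriv_Dop_dir: "ialpha_dir_deriv (Dop_dir x \<xi>) = \<xi> + tc \<xi> *\<^sub>R ialpha_dir x"
  by (rule pt_eqI) (auto simp: algebra_simps)

lemma Dop_eq_pdx:
  assumes "hom_poly k T"
  shows "Dop T x \<eta> = pdx (Dop_dir x \<eta>) T x \<eta>"
  unfolding pdx_expand[OF assms, of "Dop_dir x \<eta>"] Dop_def Es_def Es_xi_def coords_dirs
  by (simp add: algebra_simps sum.distrib sum_distrib_left sum_distrib_right sum_subtractf)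

lemma ialpha_eq_pdxi:
  assumes "hom_poly k T"
  shows "ialpha T x \<xi> = pdxi (ialpha_dir x) T x \<xi> / 2"
  unfolding pdxi_expand[OF assms, of "ialpha_dir x"] ialpha_def coords_dirs
  by (simp add: algebra_simps sum.distrib sum_distrib_left sum_distrib_right sum_subtractf)

lemma pdxi_Dop:
  assumes S: "hom_poly j S"
  shows "pdxi w (Dop S) x \<xi> = pdx (Dop_dir x w) S x \<xi> + pdx (Dop_dir x \<xi>) (pdxi w S) x \<xi>"
proof -
  have "((\<lambda>\<eta>. Dop S x \<eta>) has_derivative
      (\<lambda>w. pdx (Dop_dir x w) S x \<xi> + pdx (Dop_dir x \<xi>) (pdxi w S) x \<xi>)) (at \<xi>)"
    unfolding Dop_def Es_def Es_xi_def
    apply (rule has_derivative_eq_rhs)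
     apply (rule has_derivative_add has_derivative_diff has_derivative_sum has_derivative_mult
        has_derivative_const has_derivative_coords hom_poly_has_derivative_xi[OF hom_poly_pdx[OF S]]
        hom_poly_has_derivative_xi[OF S])+
    apply (simp only: pdx_expand[OF S, of "Dop_dir x _"]
        pdx_expand[OF hom_poly_pdxi[OF S], of "Dop_dir x \<xi>"])
    apply (simp only: pdx_pdxi_commute[OF S] coords_dirs Es_xi_def)
    apply (simp add: fun_eq_iff algebra_simps sum.distrib sum_distrib_left sum_distrib_right sum_subtractf)
    done
  then show ?thesis
    unfolding pdxi_def[of w "Dop S"] by (rule frechet_derivative_apply)
qed

lemma pdx_ialpha:
  assumes S: "hom_poly k S"
  shows "pdx v (ialpha S) x \<xi> =
    (pdxi (ialpha_dir_deriv v) S x \<xi> + pdxi (ialpha_dir x) (pdx v S) x \<xi>) / 2"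
proof -
  have "((\<lambda>y. ialpha S y \<xi>) has_derivative
      (\<lambda>v. (pdxi (ialpha_dir_deriv v) S x \<xi> + pdxi (ialpha_dir x) (pdx v S) x \<xi>) / 2)) (at x)"
    unfolding ialpha_def
    apply (rule has_derivative_eq_rhs)
     apply (rule has_derivative_add has_derivative_diff has_derivative_sum has_derivative_mult
        has_derivative_const has_derivative_coords hom_poly_has_derivative_x[OF hom_poly_pdxi[OF S]])+
    apply (simp only: pdxi_expand[OF S, of "ialpha_dir_deriv _"]
        pdxi_expand[OF hom_poly_pdx[OF S], of "ialpha_dir x"] pdx_pdxi_commute[OF S] coords_dirs)
    apply (simp add: fun_eq_iff algebra_simps sum.distrib sum_distrib_left sum_distrib_right sum_subtractf)
    done
  then show ?thesis
    unfolding pdx_def[of v "ialpha S"] by (rule frechet_derivative_apply)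
qed

lemma ialpha_hom_poly_0: "hom_poly 0 S \<Longrightarrow> ialpha S = 0"
  by (simp add: fun_eq_iff ialpha_def hom_poly_0_pdxi_Basis dq_Basis dp_Basis dt_Basis)

lemma ialpha_Dop:
  assumes S: "hom_poly j S"
  shows "ialpha (Dop S) x \<xi> =
    Dop (ialpha S) x \<xi> - tc \<xi> * ialpha S x \<xi> - real j / 2 * S x \<xi>"
proof -
  define P where "P = pdx (Dop_dir x \<xi>) (pdxi (ialpha_dir x) S) x \<xi>"
  have "pdx (Dop_dir x (ialpha_dir x)) S x \<xi> = 0"
    unfolding Dop_dir_ialpha_dir using linear_0[OF linear_pdx[OF S]] by simp
  then have lhs: "ialpha (Dop S) x \<xi> = P / 2"
    unfolding ialpha_eq_pdxi[OF hom_poly_Dop[OF S]] pdxi_Dop[OF S] P_def by simp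
  have "pdxi (ialpha_dir_deriv (Dop_dir x \<xi>)) S x \<xi> =
      real j * S x \<xi> + tc \<xi> * pdxi (ialpha_dir x) S x \<xi>"
    unfolding ialpha_dir_deriv_Dop_dir hom_poly_euler[OF S, symmetric]
    using linear_add[OF linear_pdxi[OF S]] linear_cmul[OF linear_pdxi[OF S]] by simp
  then have "Dop (ialpha S) x \<xi> = (real j * S x \<xi> + tc \<xi> * pdxi (ialpha_dir x) S x \<xi> + P) / 2"
    unfolding Dop_eq_pdx[OF hom_poly_ialpha[OF S]] pdx_ialpha[OF S] P_def pdx_pdxi_commute[OF S]
    by simp
  with lhs show ?thesis
    unfolding ialpha_eq_pdxi[OF S] by (simp add: field_simps)
qed

lemma ialpha_mult_tc:
  assumes S: "hom_poly k S"
  shows "ialpha (\<lambda>x \<xi>. tc \<xi> * S x \<xi>) x \<xi> = tc \<xi> * ialpha S x \<xi> - S x \<xi> / 2"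
proof -
  have "((\<lambda>\<eta>. tc \<eta> * S x \<eta>) has_derivative
      (\<lambda>w. tc \<xi> * pdxi w S x \<xi> + tc w * S x \<xi>)) (at \<xi>)"
    by (intro has_derivative_mult has_derivative_coords hom_poly_has_derivative_xi[OF S])
  then have "pdxi (ialpha_dir x) (\<lambda>x \<xi>. tc \<xi> * S x \<xi>) x \<xi> =
      tc \<xi> * pdxi (ialpha_dir x) S x \<xi> - S x \<xi>"
    unfolding pdxi_def[of _ "\<lambda>x \<xi>. tc \<xi> * S x \<xi>"] by (simp add: frechet_derivative_apply)
  then show ?thesis
    unfolding ialpha_eq_pdxi[OF hom_poly_mult_coords(3)[OF S]] ialpha_eq_pdxi[OF S] by simp
qed

definition commutator_const :: "nat \<Rightarrow> real \<Rightarrow> nat \<Rightarrow> real" where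
  "commutator_const n \<delta> j = - ((real n + 1) * \<delta> + real j)"

lemma ialpha_Xop:
  fixes S :: "'n::finite pt \<Rightarrow> 'n pt \<Rightarrow> real"
  assumes S: "hom_poly j S"
  shows "ialpha (Xop \<delta> j S) =
    Xop \<delta> (j - 1) (ialpha S) + commutator_const CARD('n) \<delta> j *\<^sub>R S"
proof (intro ext)
  fix x \<xi>
  define c where "c = 2 * (real CARD('n) + 1) * \<delta> + real j"
  have "Xop \<delta> j S = 1 *\<^sub>R Dop S + c *\<^sub>R (\<lambda>x \<xi>. tc \<xi> * S x \<xi>)"
    by (simp add: fun_eq_iff Xop_def c_def)
  then have "ialpha (Xop \<delta> j S) = ialpha (Dop S) + c *\<^sub>R ialpha (\<lambda>x \<xi>. tc \<xi> * S x \<xi>)"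
    using ialpha_linear[OF hom_poly_Dop[OF S] hom_poly_mult_coords(3)[OF S], where a = 1 and b = c]
    by simp
  then have lhs: "ialpha (Xop \<delta> j S) x \<xi> =
      Dop (ialpha S) x \<xi> - tc \<xi> * ialpha S x \<xi> - real j / 2 * S x \<xi> +
      c * (tc \<xi> * ialpha S x \<xi> - S x \<xi> / 2)"
    by (simp add: ialpha_Dop[OF S] ialpha_mult_tc[OF S])
  have rhs: "Xop \<delta> (j - 1) (ialpha S) x \<xi> =
      Dop (ialpha S) x \<xi> + (2 * (real CARD('n) + 1) * \<delta> + real (j - 1)) * tc \<xi> * ialpha S x \<xi>"
    by (simp add: Xop_def)
  have "j = 0 \<Longrightarrow> ialpha S x \<xi> = 0"
    using ialpha_hom_poly_0[of S] S by simp
  then show "ialpha (Xop \<delta> j S) x \<xi> =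
      (Xop \<delta> (j - 1) (ialpha S) + commutator_const CARD('n) \<delta> j *\<^sub>R S) x \<xi>"
    unfolding plus_fun_apply scaleR_fun_apply lhs rhs
    by (cases j) (simp_all add: commutator_const_def c_def algebra_simps)
qed

lemma hom_poly_ialpha_pow: "hom_poly k S \<Longrightarrow> hom_poly (k - m) ((ialpha ^^ m) S)"
proof (induction m)
  case (Suc m)
  then have "hom_poly (k - m - 1) (ialpha ((ialpha ^^ m) S))"
    by (intro hom_poly_ialpha)
  then show ?case by simp
qed simp

definition iter_commutator_const :: "nat \<Rightarrow> real \<Rightarrow> nat \<Rightarrow> nat \<Rightarrow> real" where
  "iter_commutator_const n \<delta> d m = (\<Sum>s<m. commutator_const n \<delta> (d - s))"

lemma ialpha_pow_Xop:
  fixes S :: "'n::finite pt \<Rightarrow> 'n pt \<Rightarrow> real"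
  assumes S: "hom_poly d S"
  shows "(ialpha ^^ m) (Xop \<delta> d S) =
    Xop \<delta> (d - m) ((ialpha ^^ m) S) +
      iter_commutator_const CARD('n) \<delta> d m *\<^sub>R (ialpha ^^ (m - 1)) S"
proof (induction m)
  case 0
  show ?case by (simp add: iter_commutator_const_def)
next
  case (Suc m)
  define A where "A = (ialpha ^^ m) S"
  define s where "s = iter_commutator_const CARD('n) \<delta> d m"
  have hA: "hom_poly (d - m) A"
    unfolding A_def by (rule hom_poly_ialpha_pow[OF S])
  have hB: "hom_poly (d - (m - 1)) ((ialpha ^^ (m - 1)) S)"
    by (rule hom_poly_ialpha_pow[OF S])
  have step: "s *\<^sub>R ialpha ((ialpha ^^ (m - 1)) S) = s *\<^sub>R A"
  proof (cases m)
    case 0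
    then show ?thesis by (simp add: s_def iter_commutator_const_def)
  next
    case (Suc m')
    then show ?thesis by (simp add: A_def)
  qed
  have "(ialpha ^^ Suc m) (Xop \<delta> d S) =
      ialpha (1 *\<^sub>R Xop \<delta> (d - m) A + s *\<^sub>R (ialpha ^^ (m - 1)) S)"
    by (simp only: funpow.simps comp_apply Suc.IH A_def s_def scaleR_one)
  also have "\<dots> = ialpha (Xop \<delta> (d - m) A) + s *\<^sub>R A"
    unfolding ialpha_linear[OF hom_poly_Xop[OF hA] hB] by (simp only: scaleR_one step)
  also have "\<dots> =
      Xop \<delta> (d - Suc m) (ialpha A) + (commutator_const CARD('n) \<delta> (d - m) + s) *\<^sub>R A"
  proof -
    have "d - m - 1 = d - Suc m" by simp
    then show ?thesis
      unfolding ialpha_Xop[OF hA] by (simp only: scaleR_add_left add.assoc)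
  qed
  also have "commutator_const CARD('n) \<delta> (d - m) + s = iter_commutator_const CARD('n) \<delta> d (Suc m)"
    by (simp add: s_def iter_commutator_const_def)
  finally show ?case
    by (simp add: A_def)
qed

lemma iter_commutator_const_eq_rr:
  "m \<le> Suc d \<Longrightarrow> iter_commutator_const n \<delta> d m = rr n \<delta> m (Suc d - m)"
proof (induction m)
  case 0
  then show ?case by (simp add: iter_commutator_const_def rr_def)
next
  case (Suc m)
  then have "iter_commutator_const n \<delta> d (Suc m) =
      rr n \<delta> m (Suc d - m) + commutator_const n \<delta> (d - m)"
    by (simp add: iter_commutator_const_def)
  also have "\<dots> = rr n \<delta> (Suc m) (Suc d - Suc m)"
  proof -
    have "real (Suc d - m) = real d + 1 - real m" "real (d - m) = real d - real m"
      "real (Suc d - Suc m) = real d - real m"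
      using Suc.prems by (simp_all add: of_nat_diff)
    then show ?thesis
      unfolding rr_def commutator_const_def by (simp add: field_simps)
  qed
  finally show ?case .
qed

section \<open>The filtration\<close>

lemma Fsp_eq: "Fsp k l = {u \<in> Rsp k. (ialpha ^^ l) u = 0}"
  by (simp add: Fsp_def zero_fun_def)

lemma Fsp_subset_Rsp: "Fsp k l \<subseteq> Rsp k"
  by (simp add: Fsp_eq)

lemma Fsp_0: "Fsp k 0 = {0}"
  by (auto simp: Fsp_eq Rsp_def hom_poly_zero)

lemma linear_on_ialpha: "linear_on (Rsp k) ialpha"
  by (simp add: linear_on_def Rsp_def ialpha_linear)

lemma linear_on_Xop: "linear_on (Rsp k) (Xop \<delta> j)"
  by (simp add: linear_on_def Rsp_def Xop_linear)

lemma linear_on_ialpha_pow: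
  "linear_on (Rsp k :: ('n::finite pt \<Rightarrow> 'n pt \<Rightarrow> real) set) (ialpha ^^ m)"
proof (induction m)
  case (Suc m)
  have "ialpha ((ialpha ^^ m) (a *\<^sub>R u + b *\<^sub>R v)) =
      a *\<^sub>R ialpha ((ialpha ^^ m) u) + b *\<^sub>R ialpha ((ialpha ^^ m) v)"
    if "u \<in> Rsp k" "v \<in> Rsp k" for u v :: "'n pt \<Rightarrow> 'n pt \<Rightarrow> real" and a b
  proof -
    have "(ialpha ^^ m) (a *\<^sub>R u + b *\<^sub>R v) = a *\<^sub>R (ialpha ^^ m) u + b *\<^sub>R (ialpha ^^ m) v"
      by (rule linear_onD[OF Suc.IH that])
    then show ?thesis
      using that ialpha_linear[OF hom_poly_ialpha_pow hom_poly_ialpha_pow] by (simp add: Rsp_def)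
  qed
  then show ?case
    unfolding linear_on_def by simp
qed (simp add: linear_on_def)

lemma subspace_Fsp: "subspace (Fsp k l)"
  unfolding Fsp_eq by (rule subspace_kernel_on[OF subspace_Rsp linear_on_ialpha_pow])

lemma ialpha_zero: "ialpha 0 = 0"
  by (rule ialpha_hom_poly_0[OF hom_poly_zero])

lemma Xop_zero: "Xop \<delta> j 0 = 0"
  using Xop_linear[OF hom_poly_zero hom_poly_zero, of \<delta> j 0 0] by simp

lemma ialpha_Fsp:
  assumes "u \<in> Fsp k m"
  shows "ialpha u \<in> Fsp (k - 1) (m - 1)"
proof (cases m)
  case 0
  then show ?thesis
    using assms ialpha_zero subspace_0[OF subspace_Fsp] by (simp add: Fsp_0)
next
  case (Suc m')
  then have "(ialpha ^^ m') (ialpha u) = (ialpha ^^ m) u"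
    by (simp only: funpow_Suc_right comp_apply)
  moreover have "hom_poly k u" "(ialpha ^^ m) u = 0"
    using assms by (simp_all add: Fsp_eq Rsp_def)
  ultimately show ?thesis
    using Suc hom_poly_ialpha[of k u] by (simp add: Fsp_eq Rsp_def)
qed

lemma Xop_Fsp:
  fixes v :: "'n::finite pt \<Rightarrow> 'n pt \<Rightarrow> real"
  assumes "v \<in> Fsp d (m - 1)"
  shows "Xop \<delta> d v \<in> Fsp (Suc d) m"
proof (cases m)
  case 0
  then show ?thesis
    using assms Xop_zero subspace_0[OF subspace_Fsp] by (simp add: Fsp_0)
next
  case (Suc m')
  then have "hom_poly d v" "(ialpha ^^ m') v = 0"
    using assms by (simp_all add: Fsp_eq Rsp_def)
  then show ?thesis
    using Suc ialpha_pow_Xop[of d v m \<delta>] hom_poly_Xop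
    by (simp add: Fsp_eq Rsp_def ialpha_zero Xop_zero)
qed

lemma Xop_ialpha_Fsp:
  fixes u :: "'n::finite pt \<Rightarrow> 'n pt \<Rightarrow> real"
  assumes u: "u \<in> Fsp (Suc d) (Suc m)"
  shows "Xop \<delta> d (ialpha u) - iter_commutator_const CARD('n) \<delta> d m *\<^sub>R u \<in> Fsp (Suc d) m"
proof -
  define s where "s = iter_commutator_const CARD('n) \<delta> d m"
  define v where "v = ialpha u"
  have v: "v \<in> Fsp d m"
    unfolding v_def using ialpha_Fsp[OF u] by simp
  then have hv: "hom_poly d v"
    by (simp add: Fsp_eq Rsp_def)
  have hom: "Xop \<delta> d v \<in> Rsp (Suc d)" "u \<in> Rsp (Suc d)"
    using hom_poly_Xop[OF hv] u by (auto simp: Fsp_eq Rsp_def)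
  have "(ialpha ^^ m) v = (ialpha ^^ Suc m) u"
    unfolding v_def by (simp only: funpow_Suc_right comp_apply)
  then have v0: "(ialpha ^^ m) v = 0"
    using u by (simp add: Fsp_eq)
  have shift: "s *\<^sub>R (ialpha ^^ (m - 1)) v = s *\<^sub>R (ialpha ^^ m) u"
    by (cases m) (simp_all add: s_def iter_commutator_const_def v_def funpow_swap1)
  have "(ialpha ^^ m) (Xop \<delta> d v - s *\<^sub>R u) =
      (ialpha ^^ m) (Xop \<delta> d v) - s *\<^sub>R (ialpha ^^ m) u"
    using linear_on_diff[OF linear_on_ialpha_pow hom(1) subspace_scale[OF subspace_Rsp hom(2)]]
      linear_on_scaleR[OF linear_on_ialpha_pow hom(2)] by simp
  also have "(ialpha ^^ m) (Xop \<delta> d v) = s *\<^sub>R (ialpha ^^ (m - 1)) v"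
    unfolding ialpha_pow_Xop[OF hv] v0 Xop_zero s_def by simp
  also have "s *\<^sub>R (ialpha ^^ (m - 1)) v - s *\<^sub>R (ialpha ^^ m) u = 0"
    unfolding shift by simp
  finally have "(ialpha ^^ m) (Xop \<delta> d v - s *\<^sub>R u) = 0" .
  moreover have "Xop \<delta> d v - s *\<^sub>R u \<in> Rsp (Suc d)"
    by (intro subspace_diff[OF subspace_Rsp] subspace_scale[OF subspace_Rsp] hom)
  ultimately show ?thesis
    unfolding Fsp_eq s_def v_def by simp
qed

lemma ialpha_Xop_Fsp:
  fixes v :: "'n::finite pt \<Rightarrow> 'n pt \<Rightarrow> real"
  assumes v: "v \<in> Fsp d m"
  shows "ialpha (Xop \<delta> d v) - iter_commutator_const CARD('n) \<delta> d m *\<^sub>R v \<in> Fsp d (m - 1)"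
proof (cases m)
  case 0
  then have "v = 0"
    using v by (simp add: Fsp_0)
  then show ?thesis
    using subspace_0[OF subspace_Fsp] by (simp add: Xop_zero ialpha_zero)
next
  case (Suc m')
  define s where "s = iter_commutator_const CARD('n) \<delta> d m"
  have hv: "hom_poly d v" and v0: "(ialpha ^^ m) v = 0"
    using v by (simp_all add: Fsp_eq Rsp_def)
  have hom: "ialpha (Xop \<delta> d v) \<in> Rsp d" "v \<in> Rsp d"
    using hom_poly_ialpha[OF hom_poly_Xop[OF hv]] hv by (simp_all add: Rsp_def)
  have "(ialpha ^^ m') (ialpha (Xop \<delta> d v) - s *\<^sub>R v) =
      (ialpha ^^ m') (ialpha (Xop \<delta> d v)) - s *\<^sub>R (ialpha ^^ m') v"
    using linear_on_diff[OF linear_on_ialpha_pow hom(1) subspace_scale[OF subspace_Rsp hom(2)]]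
      linear_on_scaleR[OF linear_on_ialpha_pow hom(2)] by simp
  also have "(ialpha ^^ m') (ialpha (Xop \<delta> d v)) = (ialpha ^^ m) (Xop \<delta> d v)"
    unfolding Suc by (simp only: funpow_Suc_right comp_apply)
  also have "\<dots> = s *\<^sub>R (ialpha ^^ m') v"
    unfolding ialpha_pow_Xop[OF hv] v0 Xop_zero by (simp add: s_def Suc)
  also have "s *\<^sub>R (ialpha ^^ m') v - s *\<^sub>R (ialpha ^^ m') v = 0"
    by simp
  finally have "(ialpha ^^ m') (ialpha (Xop \<delta> d v) - s *\<^sub>R v) = 0" .
  moreover have "ialpha (Xop \<delta> d v) - s *\<^sub>R v \<in> Rsp d"
    by (intro subspace_diff[OF subspace_Rsp] subspace_scale[OF subspace_Rsp] hom)
  ultimately show ?thesis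
    unfolding Fsp_eq s_def Suc by simp
qed

lemma filtered_map_ialpha:
  "filtered_map (Fsp k l) (Fsp k (l - 1)) (Fsp (k - 1) (l - 1)) (Fsp (k - 1) (l - 1 - 1)) ialpha"
  by unfold_locales
    (blast intro: subspace_Fsp ialpha_Fsp linear_on_subset[OF linear_on_ialpha Fsp_subset_Rsp])+

lemma filtered_map_Xop:
  "filtered_map (Fsp d (l - 1)) (Fsp d (l - 1 - 1)) (Fsp (Suc d) l) (Fsp (Suc d) (l - 1)) (Xop \<delta> d)"
  by unfold_locales
    (blast intro: subspace_Fsp Xop_Fsp linear_on_subset[OF linear_on_Xop Fsp_subset_Rsp])+

lemma quasi_inverse_ialpha_Xop:
  "quasi_inverse (Fsp (Suc d) (Suc m) :: ('n::finite pt \<Rightarrow> 'n pt \<Rightarrow> real) set) (Fsp (Suc d) m)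
    (Fsp d m) (Fsp d (m - 1)) ialpha (Xop \<delta> d) (iter_commutator_const CARD('n) \<delta> d m)"
proof (intro quasi_inverse.intro quasi_inverse_axioms.intro)
  show "filtered_map (Fsp (Suc d) (Suc m)) (Fsp (Suc d) m) (Fsp d m) (Fsp d (m - 1)) ialpha"
    using filtered_map_ialpha[of "Suc d" "Suc m"] by simp
  show "filtered_map (Fsp d m) (Fsp d (m - 1)) (Fsp (Suc d) (Suc m)) (Fsp (Suc d) m) (Xop \<delta> d)"
    using filtered_map_Xop[of d "Suc m" \<delta>] by simp
qed (erule Xop_ialpha_Fsp ialpha_Xop_Fsp)+

lemma grrel_eq: "grrel k l = quot_rel (Fsp k l) (Fsp k (l - 1))"
proof -
  have "(\<lambda>x \<xi>. u x \<xi> - v x \<xi>) = u - v" for u v :: "'a pt \<Rightarrow> 'a pt \<Rightarrow> real"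
    by (simp add: fun_eq_iff)
  then show ?thesis
    by (simp add: grrel_def quot_rel_def)
qed

lemma gr_eq: "gr k l = Fsp k l // quot_rel (Fsp k l) (Fsp k (l - 1))"
  by (simp add: gr_def grrel_eq)

lemma ialpha_t_eq:
  "ialpha_t k l = induced ialpha (quot_rel (Fsp (k - 1) (l - 1)) (Fsp (k - 1) (l - 1 - 1)))"
  by (simp add: fun_eq_iff ialpha_t_def induced_def cls_def grrel_eq)

lemma X_t_eq: "X_t \<delta> k l = induced (Xop \<delta> (k - 1)) (quot_rel (Fsp k l) (Fsp k (l - 1)))"
  by (simp add: fun_eq_iff X_t_def induced_def cls_def grrel_eq)

lemma scls_eq: "scls k l c = induced (scaleR c) (quot_rel (Fsp k l) (Fsp k (l - 1)))"
  by (simp add: fun_eq_iff scls_def induced_def cls_def grrel_eq scaleR_fun_def)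

theorem proposition6p2:
  fixes \<delta> :: real and k l :: nat
  assumes "k \<ge> 1" and "1 \<le> l" and "l \<le> k + 1"
  defines "r \<equiv> rr CARD('n::finite) \<delta> (l - 1) (k + 1 - l)"
  shows "(\<forall>C \<in> (gr k l :: ('n pt \<Rightarrow> 'n pt \<Rightarrow> real) set set).
            \<exists>D \<in> gr (k - 1) (l - 1). ialpha ` C \<subseteq> D)
       \<and> (\<forall>D \<in> (gr (k - 1) (l - 1) :: ('n pt \<Rightarrow> 'n pt \<Rightarrow> real) set set).
            \<exists>C \<in> gr k l. Xop \<delta> (k - 1) ` D \<subseteq> C)
       \<and> (\<forall>C \<in> (gr k l :: ('n pt \<Rightarrow> 'n pt \<Rightarrow> real) set set).
            X_t \<delta> k l (ialpha_t k l C) = scls k l r C)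
       \<and> (\<forall>D \<in> (gr (k - 1) (l - 1) :: ('n pt \<Rightarrow> 'n pt \<Rightarrow> real) set set).
            ialpha_t k l (X_t \<delta> k l D) = scls (k - 1) (l - 1) r D)
       \<and> (r \<noteq> 0 \<longrightarrow>
            bij_betw (ialpha_t k l) (gr k l :: ('n pt \<Rightarrow> 'n pt \<Rightarrow> real) set set) (gr (k - 1) (l - 1))
          \<and> (\<forall>D \<in> (gr (k - 1) (l - 1) :: ('n pt \<Rightarrow> 'n pt \<Rightarrow> real) set set).
               the_inv_into (gr k l) (ialpha_t k l) D = scls k l (1 / r) (X_t \<delta> k l D)))"
proof -
  obtain d m where k: "k = Suc d" and l: "l = Suc m"
    using assms(1,2) by (cases k; cases l) auto
  have r: "r = iter_commutator_const CARD('n) \<delta> d m"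
    using assms(3) iter_commutator_const_eq_rr[of m d] by (simp add: r_def k l)
  interpret quasi_inverse "Fsp k l :: ('n pt \<Rightarrow> 'n pt \<Rightarrow> real) set" "Fsp k (l - 1)"
    "Fsp (k - 1) (l - 1)" "Fsp (k - 1) (l - 1 - 1)" ialpha "Xop \<delta> (k - 1)" r
    using quasi_inverse_ialpha_Xop[of d m \<delta>] by (simp add: k l r)
  show ?thesis
    unfolding gr_eq ialpha_t_eq X_t_eq scls_eq by (rule induced_quasi_inverse)
qed

end
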